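(* Let $S,T$ be numberings of shape $\lambda\vdash n$, let $1\le i\le\ell(\lambda)-1$ and $1\le j\le\lambda_{i+1}$. Define \[ \pi_{i,j}^T(S)=\sum_{U\in\Xi_{i,j}(S)}\sigma_{U,T}\,a_U . \] Then $(-1)^j\pi_{i,j}^T(S)-\sigma_{S,T}\,a_S\in\ker\Psi^T$.
   Context: Permutations in $\mathfrak S_n$ act on $[n]$, products are compositions $(\sigma\tau)(k)=\sigma(\tau(k))$. A numbering of shape $\lambda\vdash n$ is a filling of the Young diagram of $\lambda$ (rows indexed top to bottom; $\ell(\lambda)$ = number of rows) with $1,\dots,n$, each exactly once. For $\pi\in\mathfrak S_n$, $\pi\cdot T$ replaces each entry $k$ by $\pi(k)$; $\sigma_{T,S}$ is the unique permutation with $\sigma_{T,S}\cdot T=S$. $R(T)$, $C(T)$ are the row and column groups; $a_T=\sum_{\rho\in R(T)}\rho$, $b_T=\sum_{\zeta\in C(T)}\operatorname{sgn}(\zeta)\zeta$. Let $\widetilde{\mathcal M}^T=a_T\,\mathbb C[\mathfrak S_n]$ (right submodule; note $\sigma_{U,T}a_U=a_T\sigma_{U,T}$), and $\Psi^T:\widetilde{\mathcal M}^T\to\mathbb C[\mathfrak S_n]$ the right-module homomorphism $a_Tx\mapsto b_Ta_Tx$. Let $J$ be the set of the first (leftmost) $j$ entries of row $i+1$ of $S$. The set $\Xi_{i,j}(S)$ consists of the numberings obtained from $S$, one for each $j$-element subset $B$ of the entries of row $i$ of $S$, by moving the entries of $J$ to the positions in row $i$ previously occupied by $B$ and the entries of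 $B$ to the positions in row $i+1$ previously occupied by $J$, preserving relative left-to-right order within each subset. *)

theory Defs
  imports Complex_Main "HOL-Combinatorics.Permutations"
begin

text \<open>Partitions: a partition lambda of n is a weakly decreasing list of positive
  naturals summing to n. Row r (1-based) has length lam ! (r - 1).\<close>
definition is_partition :: "nat list \<Rightarrow> nat \<Rightarrow> bool" where
  "is_partition lam n \<longleftrightarrow> sorted_wrt (\<ge>) lam \<and> 0 \<notin> set lam \<and> sum_list lam = n"

definition cells :: "nat list \<Rightarrow> (nat \<times> nat) set" where
  "cells lam = {(r, c). 1 \<le> r \<and> r \<le> length lam \<and> 1 \<le> c \<and> c \<le> lam ! (r - 1)}"

text \<open>A numbering of shape lam: a filling of the cells with 1..n, each exactly once
  (values outside the diagram are irrelevant).\<close>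
definition numbering :: "nat list \<Rightarrow> nat \<Rightarrow> (nat \<times> nat \<Rightarrow> nat) \<Rightarrow> bool" where
  "numbering lam n T \<longleftrightarrow> bij_betw T (cells lam) {1..n}"

definition Sym :: "nat \<Rightarrow> (nat \<Rightarrow> nat) set" where
  "Sym n = {p. p permutes {1..n}}"

definition sigma :: "nat \<Rightarrow> nat list \<Rightarrow> (nat \<times> nat \<Rightarrow> nat) \<Rightarrow> (nat \<times> nat \<Rightarrow> nat) \<Rightarrow> (nat \<Rightarrow> nat)" where
  "sigma n lam T S = (THE p. p permutes {1..n} \<and> (\<forall>c\<in>cells lam. p (T c) = S c))"

definition row_entries :: "nat list \<Rightarrow> (nat \<times> nat \<Rightarrow> nat) \<Rightarrow> nat \<Rightarrow> nat set" where
  "row_entries lam T r = {T c | c. c \<in> cells lam \<and> fst c = r}"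

definition col_entries :: "nat list \<Rightarrow> (nat \<times> nat \<Rightarrow> nat) \<Rightarrow> nat \<Rightarrow> nat set" where
  "col_entries lam T k = {T c | c. c \<in> cells lam \<and> snd c = k}"

definition row_group :: "nat \<Rightarrow> nat list \<Rightarrow> (nat \<times> nat \<Rightarrow> nat) \<Rightarrow> (nat \<Rightarrow> nat) set" where
  "row_group n lam T = {p \<in> Sym n. \<forall>r. p ` row_entries lam T r = row_entries lam T r}"

definition col_group :: "nat \<Rightarrow> nat list \<Rightarrow> (nat \<times> nat \<Rightarrow> nat) \<Rightarrow> (nat \<Rightarrow> nat) set" where
  "col_group n lam T = {p \<in> Sym n. \<forall>k. p ` col_entries lam T k = col_entries lam T k}"

text \<open>The group algebra C[S_n]: complex-valued functions on permutations supported on Sym n;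
  an element x corresponds to the formal sum of x g * g.\<close>
definition ga :: "nat \<Rightarrow> ((nat \<Rightarrow> nat) \<Rightarrow> complex) set" where
  "ga n = {x. \<forall>g. g \<notin> Sym n \<longrightarrow> x g = 0}"

definition ga_mult :: "nat \<Rightarrow> ((nat \<Rightarrow> nat) \<Rightarrow> complex) \<Rightarrow> ((nat \<Rightarrow> nat) \<Rightarrow> complex) \<Rightarrow> ((nat \<Rightarrow> nat) \<Rightarrow> complex)" where
  "ga_mult n x y = (\<lambda>g. if g \<in> Sym n then (\<Sum>h\<in>Sym n. x h * y (inv h \<circ> g)) else 0)"

definition delta :: "(nat \<Rightarrow> nat) \<Rightarrow> ((nat \<Rightarrow> nat) \<Rightarrow> complex)" where
  "delta s = (\<lambda>g. if g = s then 1 else 0)"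

definition a_elt :: "nat \<Rightarrow> nat list \<Rightarrow> (nat \<times> nat \<Rightarrow> nat) \<Rightarrow> ((nat \<Rightarrow> nat) \<Rightarrow> complex)" where
  "a_elt n lam T = (\<lambda>g. if g \<in> row_group n lam T then 1 else 0)"

definition b_elt :: "nat \<Rightarrow> nat list \<Rightarrow> (nat \<times> nat \<Rightarrow> nat) \<Rightarrow> ((nat \<Rightarrow> nat) \<Rightarrow> complex)" where
  "b_elt n lam T = (\<lambda>g. if g \<in> col_group n lam T then of_int (sign g) else 0)"

definition Mmod :: "nat \<Rightarrow> nat list \<Rightarrow> (nat \<times> nat \<Rightarrow> nat) \<Rightarrow> ((nat \<Rightarrow> nat) \<Rightarrow> complex) set" where
  "Mmod n lam T = {ga_mult n (a_elt n lam T) x | x. x \<in> ga n}"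

definition Psi :: "nat \<Rightarrow> nat list \<Rightarrow> (nat \<times> nat \<Rightarrow> nat) \<Rightarrow> ((nat \<Rightarrow> nat) \<Rightarrow> complex) \<Rightarrow> ((nat \<Rightarrow> nat) \<Rightarrow> complex)" where
  "Psi n lam T y = ga_mult n (b_elt n lam T) y"

definition ker_Psi :: "nat \<Rightarrow> nat list \<Rightarrow> (nat \<times> nat \<Rightarrow> nat) \<Rightarrow> ((nat \<Rightarrow> nat) \<Rightarrow> complex) set" where
  "ker_Psi n lam T = {y \<in> Mmod n lam T. Psi n lam T y = (\<lambda>_. 0)}"

definition xi_move :: "(nat \<times> nat \<Rightarrow> nat) \<Rightarrow> nat \<Rightarrow> nat set \<Rightarrow> (nat \<times> nat \<Rightarrow> nat)" where
  "xi_move S i Bc = (\<lambda>(r, c).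
     if r = i \<and> c \<in> Bc then S (i + 1, card {b \<in> Bc. b < c} + 1)
     else if r = i + 1 \<and> 1 \<le> c \<and> c \<le> card Bc then S (i, sorted_list_of_set Bc ! (c - 1))
     else S (r, c))"

definition Xi :: "nat list \<Rightarrow> nat \<Rightarrow> nat \<Rightarrow> (nat \<times> nat \<Rightarrow> nat) \<Rightarrow> (nat \<times> nat \<Rightarrow> nat) set" where
  "Xi lam i j S = (\<lambda>Bc. xi_move S i Bc) ` {Bc. Bc \<subseteq> {1..lam ! (i - 1)} \<and> card Bc = j}"

definition piT :: "nat \<Rightarrow> nat list \<Rightarrow> (nat \<times> nat \<Rightarrow> nat) \<Rightarrow> nat \<Rightarrow> nat \<Rightarrow> (nat \<times> nat \<Rightarrow> nat) \<Rightarrow> ((nat \<Rightarrow> nat) \<Rightarrow> complex)" where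
  "piT n lam T i j S = (\<lambda>g. \<Sum>U\<in>Xi lam i j S. ga_mult n (delta (sigma n lam U T)) (a_elt n lam U) g)"

end

theory Submission
  imports Defs
begin

text \<open>Evaluated at a permutation g, the product sigma_{U,T} a_U is the indicator that g moves every
  entry into the row of T that it occupies in U; moreover sigma_{U,T} a_U = a_T sigma_{U,T}. Hence the
  given combination lies in a_T C[S_n], and its value at g depends only on the row function t of T
  after g. Let R be row i of S. Inclusion-exclusion over the nonempty subsets J' of J rewrites that
  value as an alternating sum of the indicators "t arises from the rows of S by redistributing
  R \<union> J' over rows i and i + 1". Each indicator is invariant under transpositions inside R \<union> J',
  a set larger than row i, and is therefore annihilated by b_T (Garnir): either two entries of
  R \<union> J' land in the same column of T, and transposing them is a sign-reversing involution of the
  column group, or they occupy more distinct columns than rows i and i + 1 have.\<close>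

section \<open>Numberings and their row and column groups\<close>

definition entry_cell :: "nat list \<Rightarrow> (nat \<times> nat \<Rightarrow> nat) \<Rightarrow> nat \<Rightarrow> nat \<times> nat" where
  "entry_cell lam T = inv_into (cells lam) T"

abbreviation row_of :: "nat list \<Rightarrow> (nat \<times> nat \<Rightarrow> nat) \<Rightarrow> nat \<Rightarrow> nat" where
  "row_of lam T x \<equiv> fst (entry_cell lam T x)"

abbreviation col_of :: "nat list \<Rightarrow> (nat \<times> nat \<Rightarrow> nat) \<Rightarrow> nat \<Rightarrow> nat" where
  "col_of lam T x \<equiv> snd (entry_cell lam T x)"

lemma numbering_in_range:
  assumes "numbering lam n T" "c \<in> cells lam"
  shows "T c \<in> {1..n}"
  using assms unfolding numbering_def bij_betw_def by auto

lemma entry_cell_in_cells: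
  assumes "numbering lam n T" "x \<in> {1..n}"
  shows "entry_cell lam T x \<in> cells lam"
  using assms unfolding numbering_def entry_cell_def by (auto intro: inv_into_into simp: bij_betw_def)

lemma numbering_entry_cell:
  assumes "numbering lam n T" "x \<in> {1..n}"
  shows "T (entry_cell lam T x) = x"
  using assms unfolding numbering_def entry_cell_def by (simp add: bij_betw_inv_into_right)

lemma entry_cell_numbering:
  assumes "numbering lam n T" "c \<in> cells lam"
  shows "entry_cell lam T (T c) = c"
  using assms unfolding numbering_def entry_cell_def by (simp add: bij_betw_inv_into_left)

lemma numbering_image_cells_where:
  assumes "numbering lam n T"
  shows "T ` {c \<in> cells lam. P c} = {x \<in> {1..n}. P (entry_cell lam T x)}"
proof (intro set_eqI iffI)
  fix x assume "x \<in> T ` {c \<in> cells lam. P c}"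
  then obtain c where "c \<in> cells lam" "P c" "x = T c" by blast
  then show "x \<in> {x \<in> {1..n}. P (entry_cell lam T x)}"
    using assms entry_cell_numbering numbering_in_range by simp
next
  fix x assume "x \<in> {x \<in> {1..n}. P (entry_cell lam T x)}"
  then have x: "x \<in> {1..n}" and "P (entry_cell lam T x)" by auto
  then show "x \<in> T ` {c \<in> cells lam. P c}"
    using entry_cell_in_cells[OF assms x] numbering_entry_cell[OF assms x]
    by (intro image_eqI[where x = "entry_cell lam T x"]) auto
qed

lemma row_entries_eq:
  assumes "numbering lam n T"
  shows "row_entries lam T r = {x \<in> {1..n}. row_of lam T x = r}"
  using numbering_image_cells_where[OF assms, of "\<lambda>c. fst c = r"]
  unfolding row_entries_def by (simp add: setcompr_eq_image[symmetric])

lemma col_entries_eq: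
  assumes "numbering lam n T"
  shows "col_entries lam T k = {x \<in> {1..n}. col_of lam T x = k}"
  using numbering_image_cells_where[OF assms, of "\<lambda>c. snd c = k"]
  unfolding col_entries_def by (simp add: setcompr_eq_image[symmetric])

lemma permutes_preserves_fibres_iff:
  assumes p: "p permutes A"
  shows "(\<forall>r. p ` {x \<in> A. f x = r} = {x \<in> A. f x = r}) \<longleftrightarrow> (\<forall>x\<in>A. f (p x) = f x)"
proof
  assume H: "\<forall>r. p ` {x \<in> A. f x = r} = {x \<in> A. f x = r}"
  show "\<forall>x\<in>A. f (p x) = f x"
  proof
    fix x assume "x \<in> A"
    then have "p x \<in> p ` {y \<in> A. f y = f x}" by simp
    then have "p x \<in> {y \<in> A. f y = f x}" by (simp only: H[rule_format])
    then show "f (p x) = f x" by simp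
  qed
next
  assume H: "\<forall>x\<in>A. f (p x) = f x"
  have "p ` {x \<in> A. f x = r} = {x \<in> A. f x = r}" for r
  proof
    show "p ` {x \<in> A. f x = r} \<subseteq> {x \<in> A. f x = r}"
      using H permutes_in_image[OF p] by auto
    show "{x \<in> A. f x = r} \<subseteq> p ` {x \<in> A. f x = r}"
    proof
      fix y assume y: "y \<in> {x \<in> A. f x = r}"
      have "inv p y \<in> A" "p (inv p y) = y"
        using y permutes_in_image[OF permutes_inv[OF p]] permutes_inverses(1)[OF p] by auto
      then show "y \<in> p ` {x \<in> A. f x = r}"
        using H y by (metis (mono_tags, lifting) image_eqI mem_Collect_eq)
    qed
  qed
  then show "\<forall>r. p ` {x \<in> A. f x = r} = {x \<in> A. f x = r}" by blast
qed

lemma row_group_iff: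
  assumes "numbering lam n T"
  shows "p \<in> row_group n lam T \<longleftrightarrow>
    p permutes {1..n} \<and> (\<forall>x\<in>{1..n}. row_of lam T (p x) = row_of lam T x)"
  unfolding row_group_def Sym_def row_entries_eq[OF assms] mem_Collect_eq
  by (rule conj_cong[OF refl permutes_preserves_fibres_iff])

lemma col_group_iff:
  assumes "numbering lam n T"
  shows "p \<in> col_group n lam T \<longleftrightarrow>
    p permutes {1..n} \<and> (\<forall>x\<in>{1..n}. col_of lam T (p x) = col_of lam T x)"
  unfolding col_group_def Sym_def col_entries_eq[OF assms] mem_Collect_eq
  by (rule conj_cong[OF refl permutes_preserves_fibres_iff])

lemma sigma_permutes_and_maps:
  assumes U: "numbering lam n U" and T: "numbering lam n T"
  shows "sigma n lam U T permutes {1..n} \<and> (\<forall>c\<in>cells lam. sigma n lam U T (U c) = T c)"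
proof -
  define p where "p x = (if x \<in> {1..n} then T (entry_cell lam U x) else x)" for x
  have "bij_betw (T \<circ> entry_cell lam U) {1..n} {1..n}"
    using U T unfolding numbering_def entry_cell_def by (meson bij_betw_inv_into bij_betw_trans)
  then have "bij_betw p {1..n} {1..n}"
    by (rule bij_betw_cong[THEN iffD1, rotated]) (auto simp: p_def)
  then have p: "p permutes {1..n}"
    by (rule bij_imp_permutes) (auto simp: p_def)
  have pU: "\<forall>c\<in>cells lam. p (U c) = T c"
    using numbering_in_range[OF U] entry_cell_numbering[OF U] by (auto simp: p_def)
  have uniq: "q = p" if q: "q permutes {1..n}" "\<forall>c\<in>cells lam. q (U c) = T c" for q
  proof
    fix x show "q x = p x"
    proof (cases "x \<in> {1..n}")
      case True
      then have "x = U (entry_cell lam U x)" "entry_cell lam U x \<in> cells lam"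
        using entry_cell_in_cells[OF U True] numbering_entry_cell[OF U True] by auto
      then show ?thesis using q(2) pU by metis
    next
      case False
      then show ?thesis using q p by (metis permutes_not_in)
    qed
  qed
  have "sigma n lam U T = p"
    unfolding sigma_def
  proof (rule the_equality)
    show "p permutes {1..n} \<and> (\<forall>c\<in>cells lam. p (U c) = T c)" using p pU by blast
  qed (use uniq in blast)
  then show ?thesis using p pU by simp
qed

lemma sigma_in_Sym:
  assumes "numbering lam n U" "numbering lam n T"
  shows "sigma n lam U T \<in> Sym n"
  using sigma_permutes_and_maps[OF assms] by (simp add: Sym_def)

lemma entry_cell_sigma:
  assumes U: "numbering lam n U" and T: "numbering lam n T" and x: "x \<in> {1..n}"
  shows "entry_cell lam T (sigma n lam U T x) = entry_cell lam U x"
proof -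
  have "sigma n lam U T x = T (entry_cell lam U x)"
    using sigma_permutes_and_maps[OF U T] entry_cell_in_cells[OF U x] numbering_entry_cell[OF U x]
    by metis
  then show ?thesis using entry_cell_numbering[OF T entry_cell_in_cells[OF U x]] by simp
qed

section \<open>The group algebra\<close>

lemma finite_Sym: "finite (Sym n)"
  unfolding Sym_def by (simp add: finite_permutations)

lemma ga_mult_delta_left:
  assumes "s \<in> Sym n"
  shows "ga_mult n (delta s) y g = (if g \<in> Sym n then y (inv s \<circ> g) else 0)"
proof -
  have "(\<Sum>h\<in>Sym n. delta s h * y (inv h \<circ> g)) = (\<Sum>h\<in>Sym n. if h = s then y (inv s \<circ> g) else 0)"
    by (rule sum.cong) (auto simp: delta_def)
  also have "\<dots> = y (inv s \<circ> g)" using assms finite_Sym by simp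
  finally show ?thesis by (simp add: ga_mult_def)
qed

lemma ga_mult_delta_right:
  assumes s: "s \<in> Sym n"
  shows "ga_mult n y (delta s) g = (if g \<in> Sym n then y (g \<circ> inv s) else 0)"
proof (cases "g \<in> Sym n")
  case True
  have sp: "s permutes {1..n}" and gp: "g permutes {1..n}" using s True by (auto simp: Sym_def)
  have gs: "g \<circ> inv s \<in> Sym n" using sp gp by (simp add: Sym_def permutes_compose permutes_inv)
  have "inv h \<circ> g = s \<longleftrightarrow> h = g \<circ> inv s" if "h \<in> Sym n" for h
  proof
    have h: "h \<circ> inv h = id" "inv h \<circ> h = id"
      using permutes_inv_o that by (auto simp: Sym_def)
    have s': "s \<circ> inv s = id" "inv s \<circ> s = id" using permutes_inv_o[OF sp] by auto
    show "h = g \<circ> inv s" if "inv h \<circ> g = s"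
    proof -
      have "g = (h \<circ> inv h) \<circ> g" using h by simp
      also have "\<dots> = h \<circ> s" using that by (simp add: comp_assoc)
      finally have "g = h \<circ> s" .
      then show ?thesis using s' by (simp add: comp_assoc)
    qed
    show "inv h \<circ> g = s" if "h = g \<circ> inv s"
    proof -
      have "inv h \<circ> h \<circ> s = s" using h by simp
      then show ?thesis using that s' by (simp add: comp_assoc)
    qed
  qed
  then have "(\<Sum>h\<in>Sym n. y h * delta s (inv h \<circ> g))
      = (\<Sum>h\<in>Sym n. if h = g \<circ> inv s then y (g \<circ> inv s) else 0)"
    by (intro sum.cong) (auto simp: delta_def)
  also have "\<dots> = y (g \<circ> inv s)" using gs finite_Sym by simp
  finally show ?thesis using True by (simp add: ga_mult_def)
qed (simp add: ga_mult_def)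

lemma ga_mult_diff_right:
  "ga_mult n x (\<lambda>k. y k - z k) = (\<lambda>g. ga_mult n x y g - ga_mult n x z g)"
  by (simp add: ga_mult_def fun_eq_iff right_diff_distrib sum_subtractf)

lemma ga_mult_scale_right:
  "ga_mult n x (\<lambda>k. c * y k) = (\<lambda>g. c * ga_mult n x y g)"
  by (simp add: ga_mult_def fun_eq_iff sum_distrib_left mult.left_commute)

lemma ga_mult_sum_right:
  "ga_mult n x (\<lambda>k. \<Sum>u\<in>I. f u k) = (\<lambda>g. \<Sum>u\<in>I. ga_mult n x (f u) g)"
proof
  fix g
  show "ga_mult n x (\<lambda>k. \<Sum>u\<in>I. f u k) g = (\<Sum>u\<in>I. ga_mult n x (f u) g)"
    by (cases "g \<in> Sym n") (simp_all add: ga_mult_def sum_distrib_left sum.swap[of _ "Sym n"])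
qed

lemma ga_mult_b_elt:
  assumes "g \<in> Sym n"
  shows "ga_mult n (b_elt n lam T) z g = (\<Sum>h\<in>col_group n lam T. of_int (sign h) * z (inv h \<circ> g))"
proof -
  have "ga_mult n (b_elt n lam T) z g
      = (\<Sum>h\<in>Sym n. if h \<in> col_group n lam T then of_int (sign h) * z (inv h \<circ> g) else 0)"
    using assms by (auto simp: ga_mult_def b_elt_def intro!: sum.cong)
  also have "\<dots> = (\<Sum>h\<in>{h \<in> Sym n. h \<in> col_group n lam T}. of_int (sign h) * z (inv h \<circ> g))"
    by (rule sum.inter_filter[OF finite_Sym, symmetric])
  also have "{h \<in> Sym n. h \<in> col_group n lam T} = col_group n lam T"
    by (auto simp: col_group_def)
  finally show ?thesis .
qed

lemma inv_sigma_comp_in_row_group_iff: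
  assumes U: "numbering lam n U" and T: "numbering lam n T" and g: "g permutes {1..n}"
  shows "inv (sigma n lam U T) \<circ> g \<in> row_group n lam U \<longleftrightarrow>
    (\<forall>x\<in>{1..n}. row_of lam T (g x) = row_of lam U x)"
proof -
  let ?s = "sigma n lam U T"
  have s: "?s permutes {1..n}" using sigma_permutes_and_maps[OF U T] by simp
  have "row_of lam U (inv ?s y) = row_of lam T y" if "y \<in> {1..n}" for y
    using entry_cell_sigma[OF U T, of "inv ?s y"] that permutes_inverses(1)[OF s]
      permutes_in_image[OF permutes_inv[OF s]] by simp
  then show ?thesis
    using row_group_iff[OF U] permutes_compose[OF g permutes_inv[OF s]] permutes_in_image[OF g]
    by auto
qed

lemma comp_inv_sigma_in_row_group_iff:
  assumes U: "numbering lam n U" and T: "numbering lam n T" and g: "g permutes {1..n}"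
  shows "g \<circ> inv (sigma n lam U T) \<in> row_group n lam T \<longleftrightarrow>
    (\<forall>x\<in>{1..n}. row_of lam T (g x) = row_of lam U x)"
proof -
  let ?s = "sigma n lam U T"
  have s: "?s permutes {1..n}" using sigma_permutes_and_maps[OF U T] by simp
  have reindex: "(\<forall>y\<in>{1..n}. P y) \<longleftrightarrow> (\<forall>x\<in>{1..n}. P (?s x))" for P
  proof -
    have "(\<forall>y\<in>?s ` {1..n}. P y) \<longleftrightarrow> (\<forall>x\<in>{1..n}. P (?s x))" by simp
    then show ?thesis by (simp only: permutes_image[OF s])
  qed
  have "(\<forall>y\<in>{1..n}. row_of lam T (g (inv ?s y)) = row_of lam T y) \<longleftrightarrow>
      (\<forall>x\<in>{1..n}. row_of lam T (g (inv ?s (?s x))) = row_of lam T (?s x))"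
    by (rule reindex)
  also have "\<dots> \<longleftrightarrow> (\<forall>x\<in>{1..n}. row_of lam T (g x) = row_of lam U x)"
    using entry_cell_sigma[OF U T] permutes_inverses(2)[OF s] by simp
  finally show ?thesis
    using row_group_iff[OF T] permutes_compose[OF permutes_inv[OF s] g] by auto
qed

lemma delta_sigma_mult_a_elt:
  assumes U: "numbering lam n U" and T: "numbering lam n T" and g: "g \<in> Sym n"
  shows "ga_mult n (delta (sigma n lam U T)) (a_elt n lam U) g
    = of_bool (\<forall>x\<in>{1..n}. row_of lam T (g x) = row_of lam U x)"
  using g inv_sigma_comp_in_row_group_iff[OF U T, of g]
  by (simp add: ga_mult_delta_left[OF sigma_in_Sym[OF U T]] a_elt_def Sym_def)

lemma sigma_a_elt_commute:
  assumes U: "numbering lam n U" and T: "numbering lam n T"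
  shows "ga_mult n (delta (sigma n lam U T)) (a_elt n lam U)
    = ga_mult n (a_elt n lam T) (delta (sigma n lam U T))"
proof
  fix g
  show "ga_mult n (delta (sigma n lam U T)) (a_elt n lam U) g
    = ga_mult n (a_elt n lam T) (delta (sigma n lam U T)) g"
  proof (cases "g \<in> Sym n")
    case True
    then have "g permutes {1..n}" by (simp add: Sym_def)
    then show ?thesis
      unfolding delta_sigma_mult_a_elt[OF U T True] ga_mult_delta_right[OF sigma_in_Sym[OF U T]]
      using True comp_inv_sigma_in_row_group_iff[OF U T] by (simp add: a_elt_def)
  qed (simp add: ga_mult_def)
qed

section \<open>The vanishing lemma of Garnir\<close>

lemma col_group_comp:
  assumes T: "numbering lam n T" and p: "p \<in> col_group n lam T" and q: "q \<in> col_group n lam T"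
  shows "p \<circ> q \<in> col_group n lam T"
proof -
  have p': "p permutes {1..n}" "\<forall>x\<in>{1..n}. col_of lam T (p x) = col_of lam T x"
    and q': "q permutes {1..n}" "\<forall>x\<in>{1..n}. col_of lam T (q x) = col_of lam T x"
    using p q col_group_iff[OF T] by auto
  have "q x \<in> {1..n}" if "x \<in> {1..n}" for x using permutes_in_image[OF q'(1)] that by blast
  then show ?thesis
    using p' q' col_group_iff[OF T] by (simp add: permutes_compose)
qed

lemma col_of_inv_col_group:
  assumes T: "numbering lam n T" and h: "h \<in> col_group n lam T" and y: "y \<in> {1..n}"
  shows "col_of lam T (inv h y) = col_of lam T y"
proof -
  have h': "h permutes {1..n}" "\<forall>x\<in>{1..n}. col_of lam T (h x) = col_of lam T x"
    using h col_group_iff[OF T] by auto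
  have "inv h y \<in> {1..n}" using permutes_in_image[OF permutes_inv[OF h'(1)]] y by blast
  then show ?thesis using h' permutes_inverses(1)[OF h'(1)] by metis
qed

lemma signed_sum_col_group_eq_0:
  fixes f :: "(nat \<Rightarrow> nat) \<Rightarrow> complex"
  assumes T: "numbering lam n T" and swap: "\<tau> \<in> col_group n lam T" "sign \<tau> = -1" "\<tau> \<circ> \<tau> = id"
    and invariant: "\<And>h. h \<in> col_group n lam T \<Longrightarrow> f (\<tau> \<circ> h) = f h"
  shows "(\<Sum>h\<in>col_group n lam T. of_int (sign h) * f h) = 0"
proof -
  let ?C = "col_group n lam T"
  define F where "F h = of_int (sign h) * f h" for h
  have "F (\<tau> \<circ> h) = - F h" if h: "h \<in> ?C" for h
  proof -
    have "permutation \<tau>" "permutation h"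
      using swap(1) h col_group_iff[OF T] permutation_permutes by blast+
    then show ?thesis using invariant[OF h] sign_compose[of \<tau> h] swap(2) by (simp add: F_def)
  qed
  moreover have "sum F ?C = sum (\<lambda>h. F (\<tau> \<circ> h)) ?C"
    by (rule sum.reindex_bij_witness[of _ "\<lambda>h. \<tau> \<circ> h" "\<lambda>h. \<tau> \<circ> h"])
      (auto simp: comp_assoc[symmetric] swap(3) intro: col_group_comp[OF T swap(1)])
  ultimately have "sum F ?C = - sum F ?C" by (simp add: sum_negf)
  then show ?thesis by (simp add: F_def)
qed

lemma card_le_if_distinct_columns:
  assumes T: "numbering lam n T" and g: "g \<in> Sym n" and h: "h \<in> col_group n lam T"
    and A: "A \<subseteq> {1..n}" and distinct: "inj_on (\<lambda>x. col_of lam T (g x)) A"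
    and rows: "\<And>x. x \<in> A \<Longrightarrow> row_of lam T (inv h (g x)) \<in> K"
    and narrow: "\<And>c. c \<in> cells lam \<Longrightarrow> fst c \<in> K \<Longrightarrow> snd c \<le> m"
  shows "card A \<le> m"
proof -
  have hp: "h permutes {1..n}" using h col_group_iff[OF T] by blast
  have gA: "g x \<in> {1..n}" if "x \<in> A" for x
    using that A permutes_in_image g by (fastforce simp: Sym_def)
  have "col_of lam T (g x) \<in> {1..m}" if x: "x \<in> A" for x
  proof -
    have "inv h (g x) \<in> {1..n}" using permutes_in_image[OF permutes_inv[OF hp]] gA x by blast
    then have "entry_cell lam T (inv h (g x)) \<in> cells lam" by (rule entry_cell_in_cells[OF T])
    then have "col_of lam T (inv h (g x)) \<in> {1..m}"
      using narrow rows[OF x] by (auto simp: cells_def)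
    then show ?thesis using col_of_inv_col_group[OF T h gA[OF x]] by simp
  qed
  then have "card A \<le> card {1..m}" using distinct by (intro card_inj_on_le) auto
  then show ?thesis by simp
qed

lemma garnir_signed_sum_eq_0:
  fixes Q :: "(nat \<Rightarrow> nat) \<Rightarrow> bool"
  assumes T: "numbering lam n T" and g: "g \<in> Sym n"
    and A: "A \<subseteq> {1..n}" and card_A: "m < card A"
    and narrow: "\<And>c. c \<in> cells lam \<Longrightarrow> fst c \<in> K \<Longrightarrow> snd c \<le> m"
    and Q_swap: "\<And>t a b. a \<in> A \<Longrightarrow> b \<in> A \<Longrightarrow> Q (\<lambda>x. t (transpose a b x)) = Q t"
    and Q_rows: "\<And>t x. Q t \<Longrightarrow> x \<in> A \<Longrightarrow> t x \<in> K"
  shows "(\<Sum>h\<in>col_group n lam T. of_int (sign h) * of_bool (Q (\<lambda>x. row_of lam T (inv h (g x)))))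
    = (0::complex)"
proof (cases "\<exists>a\<in>A. \<exists>b\<in>A. a \<noteq> b \<and> col_of lam T (g a) = col_of lam T (g b)")
  case True
  let ?C = "col_group n lam T"
  have gp: "g permutes {1..n}" and "inj g" using g permutes_inj by (auto simp: Sym_def)
  have hp: "h permutes {1..n}" if "h \<in> ?C" for h using that col_group_iff[OF T] by blast
  obtain a b where ab: "a \<in> A" "b \<in> A" "a \<noteq> b" "col_of lam T (g a) = col_of lam T (g b)"
    using True by blast
  define \<tau> where "\<tau> = transpose (g a) (g b)"
  have "g a \<in> {1..n}" "g b \<in> {1..n}" using permutes_in_image[OF gp] A ab by auto
  then have "\<tau> permutes {1..n}" by (simp add: \<tau>_def permutes_swap_id)
  moreover have "\<forall>y\<in>{1..n}. col_of lam T (\<tau> y) = col_of lam T y"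
    using ab(4) by (auto simp: \<tau>_def transpose_def)
  ultimately have \<tau>C: "\<tau> \<in> ?C" using col_group_iff[OF T] by blast
  have "g a \<noteq> g b" using ab \<open>inj g\<close> by (meson injD)
  then have "sign \<tau> = -1" by (simp add: \<tau>_def sign_swap_id)
  have \<tau>g: "\<tau> (g x) = g (transpose a b x)" for x
    using \<open>inj g\<close> by (auto simp: \<tau>_def transpose_def dest: injD)
  have Q_\<tau>: "Q (\<lambda>x. row_of lam T (inv (\<tau> \<circ> h) (g x))) = Q (\<lambda>x. row_of lam T (inv h (g x)))"
    if h: "h \<in> ?C" for h
  proof -
    have "inv (\<tau> \<circ> h) = inv h \<circ> inv \<tau>"
      using o_inv_distrib permutes_bij[OF hp[OF \<tau>C]] permutes_bij[OF hp[OF h]] by blast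
    then have "inv (\<tau> \<circ> h) = inv h \<circ> \<tau>" by (simp add: \<tau>_def)
    then show ?thesis using Q_swap[OF ab(1,2)] by (simp add: \<tau>g)
  qed
  show ?thesis
    using signed_sum_col_group_eq_0[OF T \<tau>C \<open>sign \<tau> = -1\<close>] Q_\<tau> by (simp add: \<tau>_def)
next
  case False
  then have distinct: "inj_on (\<lambda>x. col_of lam T (g x)) A" by (auto simp: inj_on_def)
  have "\<not> Q (\<lambda>x. row_of lam T (inv h (g x)))" if h: "h \<in> col_group n lam T" for h
  proof
    assume Qh: "Q (\<lambda>x. row_of lam T (inv h (g x)))"
    have "card A \<le> m"
      by (rule card_le_if_distinct_columns[OF T g h A distinct _ narrow]) (rule Q_rows[OF Qh])
    then show False using card_A by simp
  qed
  then show ?thesis by (intro sum.neutral) simp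
qed

section \<open>The exchanged numberings\<close>

lemma card_less_sorted_list_of_set_nth:
  assumes "finite B" "k < card B"
  shows "card {b \<in> B. b < sorted_list_of_set B ! k} = k"
proof -
  let ?xs = "sorted_list_of_set B"
  have sorted: "sorted_wrt (<) ?xs" by (simp add: strict_sorted_list_of_set)
  have k: "k < length ?xs" using assms by simp
  have "{b \<in> B. b < ?xs ! k} = set (take k ?xs)"
  proof (intro set_eqI iffI)
    fix b assume "b \<in> {b \<in> B. b < ?xs ! k}"
    then have "b \<in> set ?xs" "b < ?xs ! k" using assms(1) by auto
    then obtain m where m: "m < length ?xs" "b = ?xs ! m" "b < ?xs ! k"
      by (auto simp: in_set_conv_nth)
    have "m < k"
    proof (rule ccontr)
      assume "\<not> m < k"
      then have "?xs ! k \<le> ?xs ! m"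
        using sorted m(1) sorted_nth_mono strict_sorted_imp_sorted by (metis not_le)
      then show False using m by simp
    qed
    then show "b \<in> set (take k ?xs)" using m by (auto simp: in_set_conv_nth intro!: exI[of _ m])
  next
    fix b assume "b \<in> set (take k ?xs)"
    then obtain m where m: "m < k" "b = ?xs ! m" using k by (auto simp: in_set_conv_nth)
    then have "b \<in> B" using k assms(1) by (metis order.strict_trans nth_mem set_sorted_list_of_set)
    moreover have "b < ?xs ! k" using m k sorted by (simp add: sorted_wrt_nth_less)
    ultimately show "b \<in> {b \<in> B. b < ?xs ! k}" by simp
  qed
  moreover have "card (set (take k ?xs)) = k"
    using k by (simp add: distinct_card distinct_take)
  ultimately show ?thesis by simp
qed

lemma sorted_list_of_set_nth_card_less:
  assumes "finite B" "c \<in> B"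
  shows "card {b \<in> B. b < c} < card B" "sorted_list_of_set B ! card {b \<in> B. b < c} = c"
proof -
  obtain m where m: "m < card B" "c = sorted_list_of_set B ! m"
    using assms by (metis in_set_conv_nth length_sorted_list_of_set set_sorted_list_of_set)
  then show "card {b \<in> B. b < c} < card B" "sorted_list_of_set B ! card {b \<in> B. b < c} = c"
    using card_less_sorted_list_of_set_nth[OF assms(1) m(1)] by simp_all
qed

definition xi_cells :: "nat \<Rightarrow> nat set \<Rightarrow> nat \<times> nat \<Rightarrow> nat \<times> nat" where
  "xi_cells i B = (\<lambda>(r, c).
     if r = i \<and> c \<in> B then (i + 1, card {b \<in> B. b < c} + 1)
     else if r = i + 1 \<and> 1 \<le> c \<and> c \<le> card B then (i, sorted_list_of_set B ! (c - 1))
     else (r, c))"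

lemma xi_move_eq_comp: "xi_move S i B = S \<circ> xi_cells i B"
  by (auto simp: xi_move_def xi_cells_def fun_eq_iff)

lemma xi_cells_involution:
  assumes B: "B \<subseteq> {1..lam ! (i - 1)}" "card B \<le> lam ! i"
    and i: "1 \<le> i" "i < length lam" and c: "c \<in> cells lam"
  shows "xi_cells i B c \<in> cells lam" "xi_cells i B (xi_cells i B c) = c"
proof -
  have fin: "finite B" using B(1) finite_subset by blast
  obtain r col where rc: "c = (r, col)" by force
  consider "r = i" "col \<in> B" | "r = i + 1" "1 \<le> col" "col \<le> card B"
    | "\<not> (r = i \<and> col \<in> B)" "\<not> (r = i + 1 \<and> 1 \<le> col \<and> col \<le> card B)"
    by blast
  then have "xi_cells i B c \<in> cells lam \<and> xi_cells i B (xi_cells i B c) = c"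
  proof cases
    case 1
    note rank = sorted_list_of_set_nth_card_less[OF fin 1(2)]
    then show ?thesis using 1 rc B i by (auto simp: xi_cells_def cells_def)
  next
    case 2
    then have k: "col - 1 < card B" by arith
    note nth = card_less_sorted_list_of_set_nth[OF fin k]
    have "sorted_list_of_set B ! (col - 1) \<in> B"
      using fin k by (metis length_sorted_list_of_set nth_mem set_sorted_list_of_set)
    then show ?thesis using 2 rc B i nth by (auto simp: xi_cells_def cells_def)
  next
    case 3
    then show ?thesis using c rc by (auto simp: xi_cells_def)
  qed
  then show "xi_cells i B c \<in> cells lam" "xi_cells i B (xi_cells i B c) = c" by auto
qed

lemma numbering_xi_move:
  assumes B: "B \<subseteq> {1..lam ! (i - 1)}" "card B \<le> lam ! i"
    and i: "1 \<le> i" "i < length lam" and S: "numbering lam n S"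
  shows "numbering lam n (xi_move S i B)"
    and "\<And>x. x \<in> {1..n} \<Longrightarrow> entry_cell lam (xi_move S i B) x = xi_cells i B (entry_cell lam S x)"
proof -
  note inv = xi_cells_involution[OF B i]
  have "bij_betw (xi_cells i B) (cells lam) (cells lam)"
    by (rule bij_betw_byWitness[of _ "xi_cells i B"]) (use inv in auto)
  then show U: "numbering lam n (xi_move S i B)"
    using S unfolding numbering_def xi_move_eq_comp by (rule bij_betw_trans)
  fix x assume x: "x \<in> {1..n}"
  note c = entry_cell_in_cells[OF S x]
  have "xi_move S i B (xi_cells i B (entry_cell lam S x)) = x"
    using inv[OF c] numbering_entry_cell[OF S x] by (simp add: xi_move_eq_comp)
  then show "entry_cell lam (xi_move S i B) x = xi_cells i B (entry_cell lam S x)"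
    using entry_cell_numbering[OF U inv(1)[OF c]] by simp
qed

lemma sum_supersets_minus_one_power:
  assumes "finite J" "D \<subseteq> J"
  shows "(\<Sum>Y | D \<subseteq> Y \<and> Y \<subseteq> J. (-1) ^ card Y) = (if D = J then (-1) ^ card J else (0::'a::ring_1))"
proof (cases "D = J")
  case True
  then have "{Y. D \<subseteq> Y \<and> Y \<subseteq> J} = {J}" by auto
  then show ?thesis using True by simp
next
  case False
  then have "D \<subset> J" using assms(2) by blast
  then have "(\<Sum>Y | Y \<subseteq> J \<and> D \<subseteq> Y. (-1) ^ card Y) = (0::'a)"
    using card_subsupersets_even_odd[OF assms(1)] assms(1)
    by (intro sum_alternating_cancels) (simp_all add: conj_assoc)
  then show ?thesis using False by (simp add: conj_commute)
qed

lemma sum_nonempty_subsets_minus_one_power: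
  assumes "finite J" "D \<subseteq> J"
  shows "(\<Sum>Y | Y \<subseteq> J \<and> Y \<noteq> {}. (-1) ^ card Y * of_bool (D \<subseteq> Y))
    = (if D = J then (-1) ^ card J else 0) - (of_bool (D = {}) :: 'a::ring_1)"
proof -
  define f :: "_ set \<Rightarrow> 'a" where "f Y = (-1) ^ card Y * of_bool (D \<subseteq> Y)" for Y
  have "sum f (Pow J) = (\<Sum>Y\<in>Pow J. if D \<subseteq> Y then (-1) ^ card Y else 0)"
    by (rule sum.cong) (auto simp: f_def)
  also have "\<dots> = (\<Sum>Y\<in>{Y \<in> Pow J. D \<subseteq> Y}. (-1) ^ card Y)"
    by (rule sum.inter_filter[symmetric]) (simp add: assms(1))
  also have "{Y \<in> Pow J. D \<subseteq> Y} = {Y. D \<subseteq> Y \<and> Y \<subseteq> J}" by auto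
  finally have "sum f (Pow J) = (if D = J then (-1) ^ card J else 0)"
    using sum_supersets_minus_one_power[OF assms] by simp
  moreover have "{Y. Y \<subseteq> J \<and> Y \<noteq> {}} = Pow J - {{}}" by auto
  moreover have "f {} = of_bool (D = {})" by (simp add: f_def)
  ultimately show ?thesis
    using sum_diff1[of "Pow J" f "{}"] assms(1) by (simp add: f_def[symmetric])
qed

section \<open>The Garnir relation\<close>

lemma numbering_row_segment_bij:
  assumes S: "numbering lam n S" and r: "1 \<le> r" "r \<le> length lam" and k: "k \<le> lam ! (r - 1)"
  shows "bij_betw (\<lambda>c. S (r, c)) {1..k} {x \<in> {1..n}. row_of lam S x = r \<and> col_of lam S x \<le> k}"
proof -
  have cells: "{c \<in> cells lam. fst c = r \<and> snd c \<le> k} = Pair r ` {1..k}"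
    using r k by (auto simp: cells_def)
  then have "inj_on S (Pair r ` {1..k})"
    using S unfolding numbering_def bij_betw_def
    by (metis (no_types, lifting) inj_on_subset mem_Collect_eq subsetI)
  then have "inj_on (S \<circ> Pair r) {1..k}"
    by (rule comp_inj_on[rotated]) (simp add: inj_on_def)
  moreover have "(S \<circ> Pair r) ` {1..k} = {x \<in> {1..n}. row_of lam S x = r \<and> col_of lam S x \<le> k}"
    using numbering_image_cells_where[OF S, of "\<lambda>c. fst c = r \<and> snd c \<le> k"] cells
    by (simp add: image_comp)
  ultimately show ?thesis by (simp add: bij_betw_def comp_def)
qed

locale garnir_setting =
  fixes lam :: "nat list" and n i j :: nat and S :: "nat \<times> nat \<Rightarrow> nat"
  assumes S: "numbering lam n S"
    and i: "1 \<le> i" "i < length lam"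
    and j: "1 \<le> j" "j \<le> lam ! i"
    and row_lengths: "lam ! i \<le> lam ! (i - 1)"
begin

definition R :: "nat set" where
  "R = {x \<in> {1..n}. row_of lam S x = i}"

definition J :: "nat set" where
  "J = {x \<in> {1..n}. row_of lam S x = i + 1 \<and> col_of lam S x \<le> j}"

abbreviation column_choices :: "nat set set" where
  "column_choices \<equiv> {B. B \<subseteq> {1..lam ! (i - 1)} \<and> card B = j}"

lemma R_bij: "bij_betw (\<lambda>c. S (i, c)) {1..lam ! (i - 1)} R"
proof -
  have "R = {x \<in> {1..n}. row_of lam S x = i \<and> col_of lam S x \<le> lam ! (i - 1)}"
    using entry_cell_in_cells[OF S] by (fastforce simp: R_def cells_def)
  then show ?thesis using numbering_row_segment_bij[OF S] i by simp
qed

lemma J_bij: "bij_betw (\<lambda>c. S (i + 1, c)) {1..j} J"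
  unfolding J_def using numbering_row_segment_bij[OF S, of "i + 1" j] i j by simp

lemma card_R: "card R = lam ! (i - 1)"
  using bij_betw_same_card[OF R_bij] by simp

lemma card_J: "card J = j"
  using bij_betw_same_card[OF J_bij] by simp

lemma R_subset: "R \<subseteq> {1..n}" and J_subset: "J \<subseteq> {1..n}" and R_J_disjoint: "R \<inter> J = {}"
  by (auto simp: R_def J_def)

lemma finite_R: "finite R" and finite_J: "finite J"
  using R_subset J_subset finite_subset by blast+

lemma finite_column_choices: "finite column_choices"
  by (rule finite_subset[of _ "Pow {1..lam ! (i - 1)}"]) auto

lemma numbering_Xi: "U \<in> Xi lam i j S \<Longrightarrow> numbering lam n U"
  using numbering_xi_move(1)[OF _ _ i S] j by (auto simp: Xi_def)

lemma row_of_xi_move: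
  assumes B: "B \<in> column_choices" and x: "x \<in> {1..n}"
  shows "row_of lam (xi_move S i B) x =
    (if x \<in> R \<and> col_of lam S x \<in> B then i + 1 else if x \<in> J then i else row_of lam S x)"
proof -
  have "entry_cell lam (xi_move S i B) x = xi_cells i B (entry_cell lam S x)"
    using numbering_xi_move(2)[OF _ _ i S x] B j by auto
  moreover obtain r c where rc: "entry_cell lam S x = (r, c)" by force
  moreover have "1 \<le> c" using entry_cell_in_cells[OF S x] rc by (simp add: cells_def)
  ultimately show ?thesis using B x by (auto simp: xi_cells_def R_def J_def)
qed

definition moved_up :: "(nat \<Rightarrow> nat) \<Rightarrow> nat set" where
  "moved_up t = {x \<in> J. t x = i}"

definition moved_down :: "(nat \<Rightarrow> nat) \<Rightarrow> nat set" where
  "moved_down t = {x \<in> R. t x = i + 1}"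

definition down_cols :: "(nat \<Rightarrow> nat) \<Rightarrow> nat set" where
  "down_cols t = {c \<in> {1..lam ! (i - 1)}. t (S (i, c)) = i + 1}"

definition exchanges_rows :: "(nat \<Rightarrow> nat) \<Rightarrow> bool" where
  "exchanges_rows t \<longleftrightarrow> (\<forall>x\<in>{1..n} - (R \<union> J). t x = row_of lam S x)
     \<and> (\<forall>x\<in>R \<union> J. t x \<in> {i, i + 1}) \<and> card (moved_down t) = card (moved_up t)"

lemma down_cols_xi_move:
  assumes B: "B \<in> column_choices" and t: "\<forall>x\<in>{1..n}. t x = row_of lam (xi_move S i B) x"
  shows "down_cols t = B"
proof -
  have "t (S (i, c)) = (if c \<in> B then i + 1 else i)" if c: "c \<in> {1..lam ! (i - 1)}" for c
  proof -
    have "S (i, c) \<in> R" using R_bij c by (auto simp: bij_betw_def)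
    moreover have "(i, c) \<in> cells lam" using c i by (auto simp: cells_def)
    ultimately show ?thesis
      using t R_subset R_J_disjoint row_of_xi_move[OF B] entry_cell_numbering[OF S] by (auto simp: R_def)
  qed
  then show ?thesis using B by (auto simp: down_cols_def split: if_splits)
qed

lemma inj_on_xi_move: "inj_on (xi_move S i) column_choices"
proof (rule inj_onI)
  fix B B' assume B: "B \<in> column_choices" and B': "B' \<in> column_choices"
    and eq: "xi_move S i B = xi_move S i B'"
  let ?t = "\<lambda>x. row_of lam (xi_move S i B) x"
  have "down_cols ?t = B" by (rule down_cols_xi_move[OF B]) simp
  moreover have "down_cols ?t = B'" by (rule down_cols_xi_move[OF B']) (simp add: eq)
  ultimately show "B = B'" by simp
qed

lemma card_down_cols: "card (down_cols t) = card (moved_down t)"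
proof -
  have R: "R = (\<lambda>c. S (i, c)) ` {1..lam ! (i - 1)}" using R_bij by (simp add: bij_betw_def)
  have "moved_down t = (\<lambda>c. S (i, c)) ` down_cols t"
  proof (intro set_eqI iffI)
    fix x assume "x \<in> moved_down t"
    then obtain c where "c \<in> {1..lam ! (i - 1)}" "x = S (i, c)" "t x = i + 1"
      using R by (auto simp: moved_down_def)
    then show "x \<in> (\<lambda>c. S (i, c)) ` down_cols t" by (auto simp: down_cols_def)
  qed (use R in \<open>auto simp: down_cols_def moved_down_def\<close>)
  moreover have "inj_on (\<lambda>c. S (i, c)) (down_cols t)"
    using R_bij unfolding bij_betw_def down_cols_def by (auto intro: inj_on_subset)
  ultimately show ?thesis by (simp add: card_image)
qed

lemma col_in_down_cols_iff:
  assumes "x \<in> R"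
  shows "col_of lam S x \<in> down_cols t \<longleftrightarrow> t x = i + 1"
proof -
  have x: "x \<in> {1..n}" "row_of lam S x = i" using assms by (auto simp: R_def)
  then have "S (i, col_of lam S x) = x"
    using numbering_entry_cell[OF S x(1)] by (metis prod.collapse)
  moreover have "col_of lam S x \<in> {1..lam ! (i - 1)}"
    using entry_cell_in_cells[OF S x(1)] x by (auto simp: cells_def)
  ultimately show ?thesis by (simp add: down_cols_def)
qed

lemma rows_of_xi_move_iff:
  "(\<exists>B\<in>column_choices. \<forall>x\<in>{1..n}. t x = row_of lam (xi_move S i B) x)
    \<longleftrightarrow> exchanges_rows t \<and> moved_up t = J"
proof
  assume "\<exists>B\<in>column_choices. \<forall>x\<in>{1..n}. t x = row_of lam (xi_move S i B) x"
  then obtain B where B: "B \<in> column_choices" and t: "\<forall>x\<in>{1..n}. t x = row_of lam (xi_move S i B) x"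
    by blast
  have t_eq: "t x = (if x \<in> R \<and> col_of lam S x \<in> B then i + 1 else if x \<in> J then i else row_of lam S x)"
    if "x \<in> {1..n}" for x using t row_of_xi_move[OF B that] that by simp
  have on_J: "t x = i" if "x \<in> J" for x
  proof -
    have "x \<in> {1..n}" "x \<notin> R" using that J_subset R_J_disjoint by auto
    then show ?thesis using that t_eq by simp
  qed
  then have up: "moved_up t = J" by (auto simp: moved_up_def)
  have on_R: "t x \<in> {i, i + 1}" if "x \<in> R" for x
  proof -
    have "x \<in> {1..n}" "x \<notin> J" "row_of lam S x = i"
      using that R_subset R_J_disjoint by (auto simp: R_def)
    then show ?thesis using that t_eq by simp
  qed
  have off: "\<forall>x\<in>{1..n} - (R \<union> J). t x = row_of lam S x" using t_eq by simp
  have "card (moved_down t) = card (moved_up t)"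
    using card_down_cols[of t] down_cols_xi_move[OF B t] B up card_J by simp
  then show "exchanges_rows t \<and> moved_up t = J"
    using on_J on_R off up by (auto simp: exchanges_rows_def)
next
  assume A: "exchanges_rows t \<and> moved_up t = J"
  then have B: "down_cols t \<in> column_choices"
    using card_down_cols card_J by (auto simp: exchanges_rows_def down_cols_def)
  have "t x = row_of lam (xi_move S i (down_cols t)) x" if x: "x \<in> {1..n}" for x
  proof (cases "x \<in> R")
    case True
    then show ?thesis
      using A col_in_down_cols_iff[OF True] row_of_xi_move[OF B x] R_J_disjoint
      by (auto simp: exchanges_rows_def R_def)
  next
    case False
    then show ?thesis
      using A x row_of_xi_move[OF B x] by (auto simp: exchanges_rows_def moved_up_def)
  qed
  then show "\<exists>B\<in>column_choices. \<forall>x\<in>{1..n}. t x = row_of lam (xi_move S i B) x"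
    using B by blast
qed

lemma rows_of_S_iff:
  "(\<forall>x\<in>{1..n}. t x = row_of lam S x) \<longleftrightarrow> exchanges_rows t \<and> moved_up t = {}"
proof
  assume "\<forall>x\<in>{1..n}. t x = row_of lam S x"
  moreover then have "moved_up t = {}" "moved_down t = {}"
    using R_subset J_subset by (auto simp: moved_up_def moved_down_def R_def J_def)
  ultimately show "exchanges_rows t \<and> moved_up t = {}"
    by (auto simp: exchanges_rows_def R_def J_def)
next
  assume "exchanges_rows t \<and> moved_up t = {}"
  then have off: "\<forall>x\<in>{1..n} - (R \<union> J). t x = row_of lam S x"
    and on: "\<forall>x\<in>R \<union> J. t x \<in> {i, i + 1}"
    and up: "moved_up t = {}" and down: "moved_down t = {}"
    using finite_R by (auto simp: exchanges_rows_def moved_down_def)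
  show "\<forall>x\<in>{1..n}. t x = row_of lam S x"
  proof
    fix x assume "x \<in> {1..n}"
    then consider "x \<in> R" | "x \<in> J" | "x \<in> {1..n} - (R \<union> J)" by blast
    then show "t x = row_of lam S x"
    proof cases
      case 1
      then show ?thesis using on down by (auto simp: moved_down_def R_def)
    next
      case 2
      then show ?thesis using on up by (auto simp: moved_up_def J_def)
    qed (use off in blast)
  qed
qed

lemma sum_Xi_rows:
  "(\<Sum>U\<in>Xi lam i j S. of_bool (\<forall>x\<in>{1..n}. t x = row_of lam U x))
    = (of_bool (exchanges_rows t \<and> moved_up t = J) :: complex)"
proof -
  let ?P = "\<lambda>B. \<forall>x\<in>{1..n}. t x = row_of lam (xi_move S i B) x"
  have "(\<Sum>U\<in>Xi lam i j S. of_bool (\<forall>x\<in>{1..n}. t x = row_of lam U x))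
      = (\<Sum>B\<in>column_choices. of_bool (?P B) :: complex)"
    unfolding Xi_def by (rule sum.reindex[OF inj_on_xi_move, unfolded comp_def])
  also have "\<dots> = (\<Sum>B\<in>column_choices. if B = down_cols t then of_bool (?P (down_cols t)) else 0)"
    by (rule sum.cong) (use down_cols_xi_move in auto)
  also have "\<dots> = of_bool (down_cols t \<in> column_choices \<and> ?P (down_cols t))"
    using finite_column_choices by (simp add: of_bool_def)
  also have "down_cols t \<in> column_choices \<and> ?P (down_cols t) \<longleftrightarrow> (\<exists>B\<in>column_choices. ?P B)"
    using down_cols_xi_move by blast
  finally show ?thesis by (simp only: rows_of_xi_move_iff)
qed


definition redistributes :: "nat set \<Rightarrow> (nat \<Rightarrow> nat) \<Rightarrow> bool" where
  "redistributes J' t \<longleftrightarrow> (\<forall>x\<in>{1..n} - (R \<union> J'). t x = row_of lam S x)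
     \<and> (\<forall>x\<in>R \<union> J'. t x \<in> {i, i + 1}) \<and> card {x \<in> R \<union> J'. t x = i + 1} = card J'"

lemma card_redistributed_down:
  assumes J': "J' \<subseteq> J" and on: "\<forall>x\<in>R \<union> J'. t x \<in> {i, i + 1}" and up: "moved_up t \<subseteq> J'"
  shows "card {x \<in> R \<union> J'. t x = i + 1} = card (moved_down t) + (card J' - card (moved_up t))"
proof -
  have fin: "finite J'" using J' finite_J finite_subset by blast
  have "{x \<in> R \<union> J'. t x = i + 1} = moved_down t \<union> (J' - moved_up t)"
    using on J' by (auto simp: moved_down_def moved_up_def)
  moreover have "moved_down t \<inter> (J' - moved_up t) = {}"
    using R_J_disjoint J' by (auto simp: moved_down_def)
  moreover have "finite (moved_down t)" using finite_R by (simp add: moved_down_def)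
  moreover have "card (J' - moved_up t) = card J' - card (moved_up t)"
    using fin up by (meson card_Diff_subset finite_subset)
  ultimately show ?thesis using fin by (simp add: card_Un_disjoint)
qed

lemma redistributes_iff:
  assumes J': "J' \<subseteq> J"
  shows "redistributes J' t \<longleftrightarrow> exchanges_rows t \<and> moved_up t \<subseteq> J'"
proof -
  have fin: "finite J'" using J' finite_J finite_subset by blast
  have J_row: "x \<in> {1..n} - (R \<union> J') \<and> row_of lam S x = i + 1" if "x \<in> J - J'" for x
    using that J_subset R_J_disjoint by (auto simp: J_def)
  show ?thesis
  proof
    assume "redistributes J' t"
    then have off: "\<forall>x\<in>{1..n} - (R \<union> J'). t x = row_of lam S x"
      and on: "\<forall>x\<in>R \<union> J'. t x \<in> {i, i + 1}"
      and card: "card {x \<in> R \<union> J'. t x = i + 1} = card J'"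
      unfolding redistributes_def by blast+
    have rest: "t x = i + 1" if "x \<in> J - J'" for x
      using J_row[OF that] off by simp
    have up: "moved_up t \<subseteq> J'"
    proof
      fix x assume "x \<in> moved_up t"
      then have "x \<in> J" "t x = i" by (simp_all add: moved_up_def)
      then show "x \<in> J'" using rest[of x] by auto
    qed
    have "card (moved_up t) \<le> card J'" using up fin card_mono by blast
    then have "card (moved_down t) = card (moved_up t)"
      using card_redistributed_down[OF J' on up] card by simp
    moreover have "\<forall>x\<in>{1..n} - (R \<union> J). t x = row_of lam S x" using off J' by blast
    moreover have "\<forall>x\<in>R \<union> J. t x \<in> {i, i + 1}" using on rest by blast
    ultimately show "exchanges_rows t \<and> moved_up t \<subseteq> J'"
      using up unfolding exchanges_rows_def by blast
  next
    assume "exchanges_rows t \<and> moved_up t \<subseteq> J'"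
    then have off: "\<forall>x\<in>{1..n} - (R \<union> J). t x = row_of lam S x"
      and on: "\<forall>x\<in>R \<union> J. t x \<in> {i, i + 1}"
      and card: "card (moved_down t) = card (moved_up t)" and up: "moved_up t \<subseteq> J'"
      unfolding exchanges_rows_def by blast+
    have "t x = row_of lam S x" if "x \<in> J - J'" for x
    proof -
      have "x \<notin> moved_up t" using that up by blast
      then show ?thesis using that on J_row[OF that] by (auto simp: moved_up_def)
    qed
    then have "\<forall>x\<in>{1..n} - (R \<union> J'). t x = row_of lam S x" using off by blast
    moreover have "\<forall>x\<in>R \<union> J'. t x \<in> {i, i + 1}" using on J' by blast
    moreover have "card (moved_up t) \<le> card J'" using up fin card_mono by blast
    ultimately show "redistributes J' t"
      using card_redistributed_down[OF J' _ up] card unfolding redistributes_def by simp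
  qed
qed

lemma redistributes_transpose:
  assumes ab: "a \<in> R \<union> J'" "b \<in> R \<union> J'"
  shows "redistributes J' (\<lambda>x. t (transpose a b x)) = redistributes J' t"
proof -
  have swap: "redistributes J' (\<lambda>x. t (transpose a b x))" if "redistributes J' t" for t
  proof -
    let ?A = "R \<union> J'"
    have A: "transpose a b x \<in> ?A \<longleftrightarrow> x \<in> ?A" for x using ab by (auto simp: transpose_def)
    have "bij_betw (transpose a b) {x \<in> ?A. t (transpose a b x) = i + 1} {y \<in> ?A. t y = i + 1}"
      by (rule bij_betw_byWitness[of _ "transpose a b"]) (use A in auto)
    then have "card {x \<in> ?A. t (transpose a b x) = i + 1} = card {y \<in> ?A. t y = i + 1}"
      by (rule bij_betw_same_card)
    moreover have "transpose a b x = x" if "x \<notin> ?A" for x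
      using that ab by (metis transpose_apply_other)
    ultimately show ?thesis using that A by (auto simp: redistributes_def)
  qed
  show ?thesis using swap[of t] swap[of "\<lambda>x. t (transpose a b x)"] by auto
qed

definition garnir_coeff :: "(nat \<Rightarrow> nat) \<Rightarrow> complex" where
  "garnir_coeff t = (-1) ^ j * (\<Sum>U\<in>Xi lam i j S. of_bool (\<forall>x\<in>{1..n}. t x = row_of lam U x))
     - of_bool (\<forall>x\<in>{1..n}. t x = row_of lam S x)"

lemma garnir_coeff_eq_sum_redistributes:
  "garnir_coeff t = (\<Sum>J' | J' \<subseteq> J \<and> J' \<noteq> {}. (-1) ^ card J' * of_bool (redistributes J' t))"
proof -
  have up: "moved_up t \<subseteq> J" by (auto simp: moved_up_def)
  have "J \<noteq> {}" using card_J j by auto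
  have "(\<Sum>J' | J' \<subseteq> J \<and> J' \<noteq> {}. (-1) ^ card J' * of_bool (redistributes J' t))
      = (\<Sum>J' | J' \<subseteq> J \<and> J' \<noteq> {}.
          of_bool (exchanges_rows t) * ((-1) ^ card J' * of_bool (moved_up t \<subseteq> J')) :: complex)"
    by (rule sum.cong) (auto simp: redistributes_iff)
  also have "\<dots> = of_bool (exchanges_rows t) *
      (\<Sum>J' | J' \<subseteq> J \<and> J' \<noteq> {}. (-1) ^ card J' * of_bool (moved_up t \<subseteq> J'))"
    by (rule sum_distrib_left[symmetric])
  also have "\<dots> = of_bool (exchanges_rows t) *
      ((if moved_up t = J then (-1) ^ j else 0) - of_bool (moved_up t = {}))"
    by (simp only: sum_nonempty_subsets_minus_one_power[OF finite_J up] card_J)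
  also have "\<dots> = garnir_coeff t"
    unfolding garnir_coeff_def sum_Xi_rows rows_of_S_iff using \<open>J \<noteq> {}\<close>
    by (cases "exchanges_rows t"; cases "moved_up t = J"; cases "moved_up t = {}") simp_all
  finally show ?thesis ..
qed

lemma signed_col_sum_garnir_coeff_eq_0:
  assumes T: "numbering lam n T" and g: "g \<in> Sym n"
  shows "(\<Sum>h\<in>col_group n lam T. of_int (sign h) * garnir_coeff (\<lambda>x. row_of lam T (inv h (g x)))) = 0"
proof -
  let ?C = "col_group n lam T" and ?P = "{J'. J' \<subseteq> J \<and> J' \<noteq> {}}"
  have narrow: "snd c \<le> lam ! (i - 1)" if "c \<in> cells lam" "fst c \<in> {i, i + 1}" for c
    using that row_lengths by (auto simp: cells_def)
  have vanish: "(\<Sum>h\<in>?C. of_int (sign h) * of_bool (redistributes J' (\<lambda>x. row_of lam T (inv h (g x)))))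
      = (0 :: complex)" if J': "J' \<in> ?P" for J'
  proof (rule garnir_signed_sum_eq_0[where Q = "redistributes J'" and A = "R \<union> J'", OF T g _ _ narrow])
    have "finite J'" using J' finite_J finite_subset by blast
    then have "card (R \<union> J') = lam ! (i - 1) + card J'"
      using J' card_R finite_R R_J_disjoint by (subst card_Un_disjoint) auto
    moreover have "card J' > 0" using J' \<open>finite J'\<close> by auto
    ultimately show "lam ! (i - 1) < card (R \<union> J')" by simp
    show "R \<union> J' \<subseteq> {1..n}" using J' R_subset J_subset by auto
    show "redistributes J' (\<lambda>x. t (transpose a b x)) = redistributes J' t"
      if "a \<in> R \<union> J'" "b \<in> R \<union> J'" for t a b
      using that by (rule redistributes_transpose)
    show "t x \<in> {i, i + 1}" if "redistributes J' t" "x \<in> R \<union> J'" for t x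
      using that unfolding redistributes_def by blast
  qed
  have "(\<Sum>h\<in>?C. of_int (sign h) * garnir_coeff (\<lambda>x. row_of lam T (inv h (g x))))
      = (\<Sum>J'\<in>?P. (-1) ^ card J' *
          (\<Sum>h\<in>?C. of_int (sign h) * of_bool (redistributes J' (\<lambda>x. row_of lam T (inv h (g x))))))"
    by (simp add: garnir_coeff_eq_sum_redistributes sum_distrib_left mult.left_commute sum.swap[of _ ?C])
  also have "\<dots> = 0" using vanish by simp
  finally show ?thesis .
qed

lemma garnir_combination_apply:
  assumes T: "numbering lam n T" and g: "g \<in> Sym n"
  shows "(-1) ^ j * piT n lam T i j S g - ga_mult n (delta (sigma n lam S T)) (a_elt n lam S) g
    = garnir_coeff (\<lambda>x. row_of lam T (g x))"
  unfolding piT_def garnir_coeff_def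
  using delta_sigma_mult_a_elt[OF numbering_Xi T g] delta_sigma_mult_a_elt[OF S T g] by simp

end

theorem proposition2p15:
  fixes lam :: "nat list" and n i j :: nat and S T :: "nat \<times> nat \<Rightarrow> nat"
  assumes "is_partition lam n"
    and "numbering lam n S" and "numbering lam n T"
    and "1 \<le> i" and "i \<le> length lam - 1"
    and "1 \<le> j" and "j \<le> lam ! i"
  shows "(\<lambda>g. (-1) ^ j * piT n lam T i j S g
              - ga_mult n (delta (sigma n lam S T)) (a_elt n lam S) g) \<in> ker_Psi n lam T"
proof -
  note S = assms(2) and T = assms(3)
  have "i < length lam" and "lam ! i \<le> lam ! (i - 1)"
    using assms(1,4,5) sorted_wrt_nth_less[of "(\<ge>)" lam "i - 1" i] by (auto simp: is_partition_def)
  then interpret garnir_setting lam n i j S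
    using S assms(4,6,7) by unfold_locales
  define z where "z g = (-1) ^ j * piT n lam T i j S g
    - ga_mult n (delta (sigma n lam S T)) (a_elt n lam S) g" for g
  define x where "x k = (-1) ^ j * (\<Sum>U\<in>Xi lam i j S. delta (sigma n lam U T) k)
    - delta (sigma n lam S T) k" for k
  have "z = ga_mult n (a_elt n lam T) x"
    unfolding z_def x_def piT_def ga_mult_diff_right ga_mult_scale_right ga_mult_sum_right
    using sigma_a_elt_commute[OF numbering_Xi T] sigma_a_elt_commute[OF S T] by simp
  moreover have "x \<in> ga n"
    using sigma_in_Sym[OF numbering_Xi T] sigma_in_Sym[OF S T]
    by (auto simp: ga_def x_def delta_def intro!: sum.neutral)
  moreover have "ga_mult n (b_elt n lam T) z g = 0" for g
  proof (cases "g \<in> Sym n")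
    case True
    have "inv h \<circ> g \<in> Sym n" if "h \<in> col_group n lam T" for h
      using that True by (auto simp: Sym_def col_group_def intro!: permutes_compose permutes_inv)
    then show ?thesis
      using signed_col_sum_garnir_coeff_eq_0[OF T True]
      by (simp add: ga_mult_b_elt[OF True] z_def garnir_combination_apply[OF T])
  qed (simp add: ga_mult_def)
  ultimately show ?thesis
    unfolding z_def[symmetric] ker_Psi_def Mmod_def Psi_def by auto
qed

end
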